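(* Let $s\in(\tfrac12,1)$. For every sufficiently smooth function $f$ on $\mathbb R^3$ (with the right-hand side finite), $$\Big\|\,\|f(x_1,x_2,\cdot)\|_{L^\infty(\mathbb R)}\Big\|_{L^{2/s}(\mathbb R^2_{x_1,x_2})}\le C\big(\|f\|_{L^2}\|\partial_2f\|_{L^2}+\|\partial_1f\|_{L^2}\|\partial_{12}f\|_{L^2}\big)^{\frac{1-s}{2}}\|f\|_{L^2}^{\frac{2s-1}{2}}\|\partial_3f\|_{L^2}^{\frac12},$$ where all unmarked norms are over $\mathbb R^3$ and $C$ depends only on $s$.
   Context: $\partial_{12}=\partial_1\partial_2$. The inner norm is taken in the vertical variable $x_3$ for fixed $(x_1,x_2)$, the outer norm in the horizontal variables. *)

theory Defs
  imports "HOL-Analysis.Analysis"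
begin

definition epowr :: "ennreal \<Rightarrow> real \<Rightarrow> ennreal" where
  "epowr a p = (if a = top then top else ennreal (enn2real a powr p))"

text \<open>L2 norm over R^3 (used only for square-integrable functions).\<close>
definition L2norm3 :: "(real \<times> real \<times> real \<Rightarrow> real) \<Rightarrow> real" where
  "L2norm3 g = sqrt (\<integral>x. (g x)\<^sup>2 \<partial>lborel)"

text \<open>Mixed norm: L^p in (x1,x2) of the L^infinity norm in x3
  (for continuous f the essential supremum in x3 is the supremum).\<close>
definition mixed_norm :: "real \<Rightarrow> (real \<times> real \<times> real \<Rightarrow> real) \<Rightarrow> ennreal" where
  "mixed_norm p f =
     epowr (\<integral>\<^sup>+ y. epowr (SUP z. ennreal \<bar>f (fst y, snd y, z)\<bar>) p \<partial>(lborel :: (real \<times> real) measure))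
           (1 / p)"

end

theory Submission
  imports Defs
begin

(*
  Everything rests on the one-dimensional Agmon inequality
  u(x)^2 <= integral |u u'| <= |u|_2 |u'|_2, used along each coordinate direction.
  Along x1 it bounds f and d2 f on every x1-line by the L2 norms of f, d1 f, resp. d2 f, d12 f on
  that line; inserting this into the Agmon inequality along x2 and integrating in x3 with
  Cauchy-Schwarz in (x2, x3) gives  integral f(x1,x2,x3)^2 dx3 <= Q := |f| |d2 f| + |d1 f| |d12 f|
  for every (x1, x2).  Along x3 it gives  sup f(x1,x2,.)^2 <= A^(1/2) B^(1/2)  with
  A = integral f^2 dx3 <= Q and B = integral (d3 f)^2 dx3.  Hence
  (sup |f|)^(2/s) <= A^(1/(2s)) B^(1/(2s)) <= Q^((1-s)/s) A^theta B^(1-theta),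
  theta = (2s-1)/(2s), and Hoelder's inequality in (x1, x2) yields the estimate with C = 1.
*)

section \<open>Hoelder's inequality for nonnegative integrals\<close>

lemma powr_mult_le_weighted_sum:
  fixes F G a b \<theta> :: real
  assumes "0 < \<theta>" "\<theta> < 1" "0 \<le> F" "0 \<le> G" "0 < a" "0 < b"
  shows "F powr \<theta> * G powr (1 - \<theta>) \<le> a powr \<theta> * b powr (1 - \<theta>) * (\<theta> * F / a + (1 - \<theta>) * G / b)"
proof (cases "F = 0 \<or> G = 0")
  case True
  then show ?thesis
    using assms by auto
next
  case False
  with assms have "(F / a) powr \<theta> * (G / b) powr (1 - \<theta>) \<le> \<theta> * (F / a) + (1 - \<theta>) * (G / b)"
    by (intro Youngs_inequality_0) auto
  then show ?thesis
    using False assms by (simp add: powr_divide field_simps)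
qed

lemma nn_integral_Holder:
  fixes F G :: "'a \<Rightarrow> real"
  assumes \<theta>: "0 < \<theta>" "\<theta> < 1"
    and [measurable]: "F \<in> borel_measurable M" "G \<in> borel_measurable M"
    and F0: "\<And>x. 0 \<le> F x" and G0: "\<And>x. 0 \<le> G x"
    and a: "(\<integral>\<^sup>+x. ennreal (F x) \<partial>M) \<le> ennreal a" and b: "(\<integral>\<^sup>+x. ennreal (G x) \<partial>M) \<le> ennreal b"
    and "0 \<le> a" "0 \<le> b"
  shows "(\<integral>\<^sup>+x. ennreal (F x powr \<theta> * G x powr (1 - \<theta>)) \<partial>M) \<le> ennreal (a powr \<theta> * b powr (1 - \<theta>))"
proof (cases "a = 0 \<or> b = 0")
  case True
  then have "AE x in M. F x = 0 \<or> G x = 0"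
    using a b F0 G0 by (auto simp: nn_integral_0_iff_AE elim: eventually_mono)
  then have "(\<integral>\<^sup>+x. ennreal (F x powr \<theta> * G x powr (1 - \<theta>)) \<partial>M) = 0"
    by (subst nn_integral_cong_AE[where v="\<lambda>_. 0"]) (auto elim: eventually_mono)
  then show ?thesis by simp
next
  case False
  with \<open>0 \<le> a\<close> \<open>0 \<le> b\<close> have "0 < a" "0 < b" by auto
  define c where "c = a powr \<theta> * b powr (1 - \<theta>)"
  have "0 < c" using \<open>0 < a\<close> \<open>0 < b\<close> by (simp add: c_def)
  have Young: "F x powr \<theta> * G x powr (1 - \<theta>) \<le> c * \<theta> / a * F x + c * (1 - \<theta>) / b * G x" for x
    using powr_mult_le_weighted_sum[OF \<theta> F0 G0 \<open>0 < a\<close> \<open>0 < b\<close>, of x x]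
    by (simp add: c_def distrib_left mult_ac)
  have "(\<integral>\<^sup>+x. ennreal (F x powr \<theta> * G x powr (1 - \<theta>)) \<partial>M)
      \<le> (\<integral>\<^sup>+x. ennreal (c * \<theta> / a) * ennreal (F x) + ennreal (c * (1 - \<theta>) / b) * ennreal (G x) \<partial>M)"
    using \<theta> \<open>0 < c\<close> \<open>0 < a\<close> \<open>0 < b\<close> F0 G0 Young
    by (intro nn_integral_mono) (simp add: ennreal_mult[symmetric] ennreal_plus[symmetric] del: ennreal_plus)
  also have "\<dots> = ennreal (c * \<theta> / a) * (\<integral>\<^sup>+x. ennreal (F x) \<partial>M)
                  + ennreal (c * (1 - \<theta>) / b) * (\<integral>\<^sup>+x. ennreal (G x) \<partial>M)"
    by (simp add: nn_integral_add nn_integral_cmult)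
  also have "\<dots> \<le> ennreal (c * \<theta> / a) * ennreal a + ennreal (c * (1 - \<theta>) / b) * ennreal b"
    by (intro add_mono mult_left_mono a b) auto
  also have "\<dots> = ennreal c"
    using \<theta> \<open>0 < c\<close> \<open>0 < a\<close> \<open>0 < b\<close>
    by (simp add: ennreal_mult[symmetric] ennreal_plus[symmetric] field_simps del: ennreal_plus)
  finally show ?thesis by (simp add: c_def)
qed

lemma nn_integral_Cauchy_Schwarz:
  fixes F G :: "'a \<Rightarrow> real"
  assumes "F \<in> borel_measurable M" "G \<in> borel_measurable M"
    and "\<And>x. 0 \<le> F x" "\<And>x. 0 \<le> G x"
    and "(\<integral>\<^sup>+x. ennreal (F x) \<partial>M) \<le> ennreal a" "(\<integral>\<^sup>+x. ennreal (G x) \<partial>M) \<le> ennreal b"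
    and "0 \<le> a" "0 \<le> b"
  shows "(\<integral>\<^sup>+x. ennreal (sqrt (F x) * sqrt (G x)) \<partial>M) \<le> ennreal (sqrt a * sqrt b)"
  using nn_integral_Holder[of "1/2" F M G a b] assms by (simp add: powr_half_sqrt)

section \<open>The one-dimensional Agmon inequality\<close>

lemma emeasure_lborel_atMost [simp]: "emeasure lborel {..x::real} = \<infinity>"
proof -
  have "of_nat n \<le> emeasure lborel {..x}" for n
    using emeasure_mono[of "{x - real n..x}" "{..x}" lborel] by (simp add: ennreal_of_nat_eq_real_of_nat)
  then have "(SUP n. of_nat n) \<le> emeasure lborel {..x}"
    by (rule SUP_least)
  then show ?thesis
    by (simp add: ennreal_SUP_of_nat_eq_top top_unique)
qed

lemma emeasure_lborel_atLeast [simp]: "emeasure lborel {x::real..} = \<infinity>"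
proof -
  have "of_nat n \<le> emeasure lborel {x..}" for n
    using emeasure_mono[of "{x..x + real n}" "{x..}" lborel] by (simp add: ennreal_of_nat_eq_real_of_nat)
  then have "(SUP n. of_nat n) \<le> emeasure lborel {x..}"
    by (rule SUP_least)
  then show ?thesis
    by (simp add: ennreal_SUP_of_nat_eq_top top_unique)
qed

lemma nn_integral_finite_imp_small_value:
  assumes "(\<integral>\<^sup>+t. ennreal (g t) \<partial>M) < \<infinity>" "A \<in> sets M" "emeasure M A = \<infinity>" "0 < e"
  shows "\<exists>y\<in>A. g y < e"
proof (rule ccontr)
  assume "\<not> ?thesis"
  then have "ennreal e * indicator A t \<le> ennreal (g t)" for t
    by (auto simp: indicator_def not_less intro!: ennreal_leI)
  then have "ennreal e * emeasure M A \<le> (\<integral>\<^sup>+t. ennreal (g t) \<partial>M)"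
    using nn_integral_mono nn_integral_cmult_indicator[OF \<open>A \<in> sets M\<close>] by metis
  with assms show False by (simp add: ennreal_mult_top)
qed

lemma integral_le_nn_integral:
  fixes g :: "real \<Rightarrow> real"
  assumes "g integrable_on {a..b}" "\<And>t. 0 \<le> g t"
  shows "ennreal (integral {a..b} g) \<le> (\<integral>\<^sup>+t. ennreal (g t) \<partial>lborel)"
proof -
  have "ennreal (integral {a..b} g) = (\<integral>\<^sup>+t. ennreal (g t) * indicator {a..b} t \<partial>lborel)"
    using assms by (intro nn_integral_has_integral_lebesgue'[symmetric]) auto
  also have "\<dots> \<le> (\<integral>\<^sup>+t. ennreal (g t) \<partial>lborel)"
    by (intro nn_integral_mono) (auto simp: indicator_def)
  finally show ?thesis .
qed

lemma abs_square_diff_le_integral: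
  fixes u u' :: "real \<Rightarrow> real"
  assumes deriv: "\<And>t. (u has_real_derivative u' t) (at t)" and "\<And>a b. (\<lambda>t. \<bar>u t * u' t\<bar>) integrable_on {a..b}"
    and "a \<le> b"
  shows "\<bar>(u b)\<^sup>2 - (u a)\<^sup>2\<bar> \<le> 2 * integral {a..b} (\<lambda>t. \<bar>u t * u' t\<bar>)"
proof -
  have "((\<lambda>t. (u t)\<^sup>2) has_real_derivative 2 * u t * u' t) (at t)" for t
    using DERIV_mult[OF deriv deriv, of t] by (simp add: power2_eq_square algebra_simps)
  then have FTC: "((\<lambda>t. 2 * u t * u' t) has_integral (u b)\<^sup>2 - (u a)\<^sup>2) {a..b}"
    using \<open>a \<le> b\<close> by (intro fundamental_theorem_of_calculus)
      (auto simp: has_real_derivative_iff_has_vector_derivative[symmetric] intro: has_field_derivative_at_within)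
  have bound: "((\<lambda>t. 2 * \<bar>u t * u' t\<bar>) has_integral 2 * integral {a..b} (\<lambda>t. \<bar>u t * u' t\<bar>)) {a..b}"
    using assms(2) by (intro has_integral_mult_right integrable_integral)
  have "(u b)\<^sup>2 - (u a)\<^sup>2 \<le> 2 * integral {a..b} (\<lambda>t. \<bar>u t * u' t\<bar>)"
    by (rule has_integral_le[OF FTC bound]) (auto simp: abs_mult[symmetric])
  moreover have "- ((u b)\<^sup>2 - (u a)\<^sup>2) \<le> 2 * integral {a..b} (\<lambda>t. \<bar>u t * u' t\<bar>)"
    by (rule has_integral_le[OF has_integral_neg[OF FTC] bound]) (auto simp: abs_mult[symmetric])
  ultimately show ?thesis
    by linarith
qed

lemma square_le_nn_integral_abs_mult_deriv:
  fixes u u' :: "real \<Rightarrow> real"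
  assumes deriv: "\<And>t. (u has_real_derivative u' t) (at t)" and "continuous_on UNIV u'"
    and L2: "(\<integral>\<^sup>+t. ennreal ((u t)\<^sup>2) \<partial>lborel) < \<infinity>"
  shows "ennreal ((u x)\<^sup>2) \<le> (\<integral>\<^sup>+t. ennreal \<bar>u t * u' t\<bar> \<partial>lborel)"
proof (cases "(\<integral>\<^sup>+t. ennreal \<bar>u t * u' t\<bar> \<partial>lborel) = \<infinity>")
  case False
  then obtain r where r: "(\<integral>\<^sup>+t. ennreal \<bar>u t * u' t\<bar> \<partial>lborel) = ennreal r" "0 \<le> r"
    by (cases "(\<integral>\<^sup>+t. ennreal \<bar>u t * u' t\<bar> \<partial>lborel)") auto
  define g where "g t = \<bar>u t * u' t\<bar>" for t
  have "continuous_on UNIV u"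
    using deriv by (meson DERIV_isCont continuous_at_imp_continuous_on)
  then have g_integrable: "g integrable_on {a..b}" for a b
    unfolding g_def using \<open>continuous_on UNIV u'\<close>
    by (intro integrable_continuous_interval continuous_intros) (auto intro: continuous_on_subset)
  have square_diff: "\<bar>(u b)\<^sup>2 - (u a)\<^sup>2\<bar> \<le> 2 * integral {a..b} g" if "a \<le> b" for a b
    unfolding g_def by (rule abs_square_diff_le_integral[OF deriv g_integrable[unfolded g_def] that])
  have "(u x)\<^sup>2 \<le> r + e" if "0 < e" for e
  proof -
    obtain y1 where y1: "y1 \<le> x" "(u y1)\<^sup>2 < e"
      using nn_integral_finite_imp_small_value[OF L2 _ _ \<open>0 < e\<close>, of "{..x}"] by auto
    obtain y2 where y2: "x \<le> y2" "(u y2)\<^sup>2 < e"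
      using nn_integral_finite_imp_small_value[OF L2 _ _ \<open>0 < e\<close>, of "{x..}"] by auto
    have "integral {y1..x} g + integral {x..y2} g = integral {y1..y2} g"
      using y1 y2 g_integrable by (intro Henstock_Kurzweil_Integration.integral_combine) auto
    moreover have "integral {y1..y2} g \<le> r"
      using integral_le_nn_integral[OF g_integrable, of y1 y2] r by (simp add: g_def)
    ultimately show ?thesis
      using square_diff[OF y1(1)] square_diff[OF y2(1)] y1(2) y2(2) by linarith
  qed
  then have "(u x)\<^sup>2 \<le> r"
    by (meson field_le_epsilon)
  then show ?thesis
    using r by simp
qed simp

lemma Agmon_inequality:
  fixes u u' :: "real \<Rightarrow> real"
  assumes "\<And>t. (u has_real_derivative u' t) (at t)" "continuous_on UNIV u'"
    and A: "(\<integral>\<^sup>+t. ennreal ((u t)\<^sup>2) \<partial>lborel) \<le> ennreal A"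
    and B: "(\<integral>\<^sup>+t. ennreal ((u' t)\<^sup>2) \<partial>lborel) \<le> ennreal B"
    and "0 \<le> A" "0 \<le> B"
  shows "(u x)\<^sup>2 \<le> sqrt A * sqrt B"
proof -
  have "continuous_on UNIV u"
    using assms(1) by (meson DERIV_isCont continuous_at_imp_continuous_on)
  then have [measurable]: "u \<in> borel_measurable borel" "u' \<in> borel_measurable borel"
    using assms(2) by (auto intro: borel_measurable_continuous_onI)
  have "(\<integral>\<^sup>+t. ennreal ((u t)\<^sup>2) \<partial>lborel) < \<infinity>"
    using A by (rule le_less_trans) simp
  then have "ennreal ((u x)\<^sup>2) \<le> (\<integral>\<^sup>+t. ennreal \<bar>u t * u' t\<bar> \<partial>lborel)"
    by (intro square_le_nn_integral_abs_mult_deriv assms)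
  also have "\<dots> = (\<integral>\<^sup>+t. ennreal (sqrt ((u t)\<^sup>2) * sqrt ((u' t)\<^sup>2)) \<partial>lborel)"
    by (simp add: abs_mult)
  also have "\<dots> \<le> ennreal (sqrt A * sqrt B)"
    using A B assms(5,6) by (intro nn_integral_Cauchy_Schwarz) auto
  finally show ?thesis
    using assms(5,6) by simp
qed

lemma square_le_nn_integral_majorant:
  fixes u u' P \<Phi> :: "real \<Rightarrow> real"
  assumes "\<And>t. (u has_real_derivative u' t) (at t)" "continuous_on UNIV u'"
    and "AE t in lborel. (u t)\<^sup>2 \<le> P t" "(\<integral>\<^sup>+t. ennreal (P t) \<partial>lborel) \<noteq> \<infinity>"
    and "AE t in lborel. \<bar>u t * u' t\<bar> \<le> \<Phi> t"
  shows "ennreal ((u x)\<^sup>2) \<le> (\<integral>\<^sup>+t. ennreal (\<Phi> t) \<partial>lborel)"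
proof -
  have "(\<integral>\<^sup>+t. ennreal ((u t)\<^sup>2) \<partial>lborel) \<le> (\<integral>\<^sup>+t. ennreal (P t) \<partial>lborel)"
    using assms(3) by (intro nn_integral_mono_AE) (auto elim!: eventually_mono intro: ennreal_leI)
  then have "ennreal ((u x)\<^sup>2) \<le> (\<integral>\<^sup>+t. ennreal \<bar>u t * u' t\<bar> \<partial>lborel)"
    using assms(1,2,4)
    by (intro square_le_nn_integral_abs_mult_deriv) (auto simp: top.not_eq_extremum intro: le_less_trans)
  also have "\<dots> \<le> (\<integral>\<^sup>+t. ennreal (\<Phi> t) \<partial>lborel)"
    using assms(5) by (intro nn_integral_mono_AE) (auto elim!: eventually_mono intro: ennreal_leI)
  finally show ?thesis .
qed

section \<open>Iterated integrals over the coordinate lines of \<open>\<real>\<^sup>3\<close>\<close>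

lemma (in pair_sigma_finite) AE_pair_commute:
  assumes "{x \<in> space (M1 \<Otimes>\<^sub>M M2). P x} \<in> sets (M1 \<Otimes>\<^sub>M M2)" and "AE x in M1 \<Otimes>\<^sub>M M2. P x"
  shows "AE y in M2. AE x in M1. P (x, y)"
  using AE_pair[OF assms(2)] AE_commute[of "\<lambda>x y. P (x, y)"] assms(1) by simp

lemma (in pair_sigma_finite) nn_integral_partial_L2_Cauchy_Schwarz:
  fixes g h :: "'a \<times> 'b \<Rightarrow> real"
  assumes "g \<in> borel_measurable (M1 \<Otimes>\<^sub>M M2)" "h \<in> borel_measurable (M1 \<Otimes>\<^sub>M M2)"
    and "(\<integral>\<^sup>+p. ennreal ((g p)\<^sup>2) \<partial>(M1 \<Otimes>\<^sub>M M2)) \<le> ennreal G"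
    and "(\<integral>\<^sup>+p. ennreal ((h p)\<^sup>2) \<partial>(M1 \<Otimes>\<^sub>M M2)) \<le> ennreal H"
    and "0 \<le> G" "0 \<le> H"
  shows "(\<integral>\<^sup>+y. ennreal (sqrt (enn2real (\<integral>\<^sup>+x. ennreal ((g (x, y))\<^sup>2) \<partial>M1))
                    * sqrt (enn2real (\<integral>\<^sup>+x. ennreal ((h (x, y))\<^sup>2) \<partial>M1))) \<partial>M2)
         \<le> ennreal (sqrt G * sqrt H)"
proof -
  note M1.borel_measurable_nn_integral[measurable (raw)]
  have partial_L2: "(\<integral>\<^sup>+y. ennreal (enn2real (\<integral>\<^sup>+x. ennreal ((k (x, y))\<^sup>2) \<partial>M1)) \<partial>M2)
      \<le> (\<integral>\<^sup>+p. ennreal ((k p)\<^sup>2) \<partial>(M1 \<Otimes>\<^sub>M M2))"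
    if [measurable]: "k \<in> borel_measurable (M1 \<Otimes>\<^sub>M M2)" for k
  proof -
    have "(\<integral>\<^sup>+y. ennreal (enn2real (\<integral>\<^sup>+x. ennreal ((k (x, y))\<^sup>2) \<partial>M1)) \<partial>M2)
        \<le> (\<integral>\<^sup>+y. (\<integral>\<^sup>+x. ennreal ((k (x, y))\<^sup>2) \<partial>M1) \<partial>M2)"
      by (intro nn_integral_mono) (simp add: ennreal_enn2real_if)
    also have "\<dots> = (\<integral>\<^sup>+p. ennreal ((k p)\<^sup>2) \<partial>(M1 \<Otimes>\<^sub>M M2))"
      by (rule nn_integral_snd) measurable
    finally show ?thesis .
  qed
  show ?thesis
    using assms partial_L2[of g] partial_L2[of h]
    by (intro nn_integral_Cauchy_Schwarz) (measurable, auto)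
qed

lemma nn_integral_lborel_vertical:
  fixes g :: "'a::euclidean_space \<times> 'b::euclidean_space \<times> 'c::euclidean_space \<Rightarrow> ennreal"
  assumes [measurable]: "g \<in> borel_measurable (lborel \<Otimes>\<^sub>M lborel \<Otimes>\<^sub>M lborel)"
  shows "(\<integral>\<^sup>+w. (\<integral>\<^sup>+z. g (fst w, snd w, z) \<partial>lborel) \<partial>(lborel \<Otimes>\<^sub>M lborel))
       = (\<integral>\<^sup>+x. g x \<partial>(lborel \<Otimes>\<^sub>M lborel \<Otimes>\<^sub>M lborel))"
proof -
  have inner: "(\<lambda>w. \<integral>\<^sup>+z. g (fst w, snd w, z) \<partial>lborel) \<in> borel_measurable (lborel \<Otimes>\<^sub>M lborel)"
    by measurable
  have "(\<integral>\<^sup>+w. (\<integral>\<^sup>+z. g (fst w, snd w, z) \<partial>lborel) \<partial>(lborel \<Otimes>\<^sub>M lborel))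
      = (\<integral>\<^sup>+x. (\<integral>\<^sup>+y. (\<integral>\<^sup>+z. g (x, y, z) \<partial>lborel) \<partial>lborel) \<partial>lborel)"
    using lborel.nn_integral_fst[OF inner] by simp
  also have "\<dots> = (\<integral>\<^sup>+x. (\<integral>\<^sup>+yz. g (x, yz) \<partial>lborel) \<partial>lborel)"
  proof (rule nn_integral_cong)
    fix x
    have slice: "(\<lambda>yz. g (x, yz)) \<in> borel_measurable (lborel \<Otimes>\<^sub>M lborel)"
      by measurable
    show "(\<integral>\<^sup>+y. (\<integral>\<^sup>+z. g (x, y, z) \<partial>lborel) \<partial>lborel) = (\<integral>\<^sup>+yz. g (x, yz) \<partial>lborel)"
      using lborel.nn_integral_fst[OF slice] by (simp add: lborel_prod)
  qed
  also have "\<dots> = (\<integral>\<^sup>+x. g x \<partial>(lborel \<Otimes>\<^sub>M lborel \<Otimes>\<^sub>M lborel))"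
    using assms lborel.nn_integral_fst[of g lborel] by (simp add: lborel_prod)
  finally show ?thesis .
qed

lemma nn_integral_square_eq_L2norm3:
  assumes "integrable lborel (\<lambda>x. (g x)\<^sup>2)"
  shows "(\<integral>\<^sup>+x. ennreal ((g x)\<^sup>2) \<partial>lborel) = ennreal ((L2norm3 g)\<^sup>2)"
proof -
  have "0 \<le> (\<integral>x. (g x)\<^sup>2 \<partial>lborel)"
    by (rule integral_nonneg_AE) auto
  then show ?thesis
    using nn_integral_eq_integral[OF assms] by (simp add: L2norm3_def)
qed

lemma L2norm3_nonneg: "0 \<le> L2norm3 g"
  by (simp add: L2norm3_def)

text \<open>\<open>enn2real\<close> makes this \<open>0\<close> where the line integral is infinite.\<close>
definition line_L2sq :: "(real \<times> 'b \<Rightarrow> real) \<Rightarrow> 'b \<Rightarrow> real" where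
  "line_L2sq g w = enn2real (\<integral>\<^sup>+t. ennreal ((g (t, w))\<^sup>2) \<partial>lborel)"

lemma line_L2sq_nonneg [simp]: "0 \<le> line_L2sq g w"
  by (simp add: line_L2sq_def)

lemma borel_measurable_line_L2sq [measurable]:
  fixes g :: "real \<times> 'b::euclidean_space \<Rightarrow> real"
  assumes [measurable]: "g \<in> borel_measurable borel"
  shows "line_L2sq g \<in> borel_measurable lborel"
  unfolding line_L2sq_def[abs_def] by measurable

lemma square_le_line_L2sq:
  fixes g g' :: "real \<times> 'b \<Rightarrow> real"
  assumes "\<And>t. ((\<lambda>t. g (t, w)) has_real_derivative g' (t, w)) (at t)"
    and "continuous_on UNIV (\<lambda>t. g' (t, w))"
    and "(\<integral>\<^sup>+t. ennreal ((g (t, w))\<^sup>2) \<partial>lborel) \<noteq> \<infinity>"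
    and "(\<integral>\<^sup>+t. ennreal ((g' (t, w))\<^sup>2) \<partial>lborel) \<noteq> \<infinity>"
  shows "(g (t, w))\<^sup>2 \<le> sqrt (line_L2sq g w) * sqrt (line_L2sq g' w)"
  using assms unfolding line_L2sq_def
  by (intro Agmon_inequality[where u="\<lambda>t. g (t, w)"]) (auto simp: ennreal_enn2real_if)

lemma abs_mult_le_line_L2sq:
  fixes g g' h h' :: "real \<times> 'b \<Rightarrow> real"
  assumes "\<And>t. ((\<lambda>t. g (t, w)) has_real_derivative g' (t, w)) (at t)" "continuous_on UNIV (\<lambda>t. g' (t, w))"
    and "\<And>t. ((\<lambda>t. h (t, w)) has_real_derivative h' (t, w)) (at t)" "continuous_on UNIV (\<lambda>t. h' (t, w))"
    and "\<forall>k\<in>{g, g', h, h'}. (\<integral>\<^sup>+t. ennreal ((k (t, w))\<^sup>2) \<partial>lborel) \<noteq> \<infinity>"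
  shows "\<bar>g (t, w) * h (t, w)\<bar>
    \<le> sqrt (sqrt (line_L2sq g w) * sqrt (line_L2sq h w)) * sqrt (sqrt (line_L2sq g' w) * sqrt (line_L2sq h' w))"
proof -
  have "(g (t, w))\<^sup>2 * (h (t, w))\<^sup>2
      \<le> (sqrt (line_L2sq g w) * sqrt (line_L2sq g' w)) * (sqrt (line_L2sq h w) * sqrt (line_L2sq h' w))"
    using assms by (intro mult_mono square_le_line_L2sq) auto
  then have "sqrt ((g (t, w))\<^sup>2 * (h (t, w))\<^sup>2)
      \<le> sqrt ((sqrt (line_L2sq g w) * sqrt (line_L2sq g' w)) * (sqrt (line_L2sq h w) * sqrt (line_L2sq h' w)))"
    by (rule real_sqrt_le_mono)
  then show ?thesis
    by (simp add: real_sqrt_mult abs_mult ac_simps)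
qed

lemma nn_integral_sqrt_line_L2sq_le:
  fixes g h :: "real \<times> real \<times> real \<Rightarrow> real"
  assumes "continuous_on UNIV g" "continuous_on UNIV h"
    and "integrable lborel (\<lambda>x. (g x)\<^sup>2)" "integrable lborel (\<lambda>x. (h x)\<^sup>2)"
  shows "(\<integral>\<^sup>+w. ennreal (sqrt (line_L2sq g w) * sqrt (line_L2sq h w)) \<partial>lborel) \<le> ennreal (L2norm3 g * L2norm3 h)"
proof -
  have "(\<integral>\<^sup>+w. ennreal (sqrt (line_L2sq g w) * sqrt (line_L2sq h w)) \<partial>lborel)
      \<le> ennreal (sqrt ((L2norm3 g)\<^sup>2) * sqrt ((L2norm3 h)\<^sup>2))"
    unfolding line_L2sq_def using assms
    by (intro lborel_pair.nn_integral_partial_L2_Cauchy_Schwarz[simplified lborel_prod])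
      (auto simp: nn_integral_square_eq_L2norm3 intro: borel_measurable_continuous_onI)
  then show ?thesis
    by (simp add: L2norm3_nonneg)
qed

lemma AE_nn_integral_sqrt_line_L2sq_finite:
  fixes g h :: "real \<times> real \<times> real \<Rightarrow> real"
  assumes "continuous_on UNIV g" "continuous_on UNIV h"
    and "integrable lborel (\<lambda>x. (g x)\<^sup>2)" "integrable lborel (\<lambda>x. (h x)\<^sup>2)"
  shows "AE z in lborel. (\<integral>\<^sup>+y. ennreal (sqrt (line_L2sq g (y, z)) * sqrt (line_L2sq h (y, z))) \<partial>lborel) \<noteq> \<infinity>"
proof -
  have [measurable]: "g \<in> borel_measurable borel" "h \<in> borel_measurable borel"
    using assms(1,2) by (auto intro: borel_measurable_continuous_onI)
  have "(\<integral>\<^sup>+z. (\<integral>\<^sup>+y. ennreal (sqrt (line_L2sq g (y, z)) * sqrt (line_L2sq h (y, z))) \<partial>lborel) \<partial>lborel)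
      = (\<integral>\<^sup>+w. ennreal (sqrt (line_L2sq g w) * sqrt (line_L2sq h w)) \<partial>lborel)"
    using lborel_pair.nn_integral_snd[of "\<lambda>w. ennreal (sqrt (line_L2sq g w) * sqrt (line_L2sq h w))"]
    by (simp add: lborel_prod)
  also have "\<dots> \<le> ennreal (L2norm3 g * L2norm3 h)"
    using assms by (rule nn_integral_sqrt_line_L2sq_le)
  finally show ?thesis
    by (intro nn_integral_PInf_AE) (auto simp: top_unique)
qed

lemma AE_line_integral_finite:
  fixes g :: "real \<times> real \<times> real \<Rightarrow> real"
  assumes "continuous_on UNIV g" "integrable lborel (\<lambda>x. (g x)\<^sup>2)"
  shows "AE z in lborel. AE y in lborel. (\<integral>\<^sup>+t. ennreal ((g (t, y, z))\<^sup>2) \<partial>lborel) \<noteq> \<infinity>"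
proof -
  have [measurable]: "g \<in> borel_measurable borel"
    using assms(1) by (rule borel_measurable_continuous_onI)
  have "(\<integral>\<^sup>+w. (\<integral>\<^sup>+t. ennreal ((g (t, w))\<^sup>2) \<partial>lborel) \<partial>lborel) = ennreal ((L2norm3 g)\<^sup>2)"
    using lborel_pair.nn_integral_snd[of "\<lambda>x. ennreal ((g x)\<^sup>2)"] assms(2)
    by (simp add: lborel_prod nn_integral_square_eq_L2norm3)
  then have "AE w in lborel \<Otimes>\<^sub>M lborel. (\<integral>\<^sup>+t. ennreal ((g (t, w))\<^sup>2) \<partial>lborel) \<noteq> \<infinity>"
    unfolding lborel_prod by (intro nn_integral_PInf_AE) auto
  moreover have "{w \<in> space (lborel \<Otimes>\<^sub>M lborel). (\<integral>\<^sup>+t. ennreal ((g (t, w))\<^sup>2) \<partial>lborel) \<noteq> \<infinity>}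
      \<in> sets (lborel \<Otimes>\<^sub>M lborel)"
    unfolding lborel_prod by measurable
  ultimately show ?thesis
    by (intro lborel_pair.AE_pair_commute)
qed

lemma nn_integral_sqrt_line_L2sq_le_sum:
  fixes g1 h1 g2 h2 :: "real \<times> real \<times> real \<Rightarrow> real"
  assumes "continuous_on UNIV g1" "continuous_on UNIV h1" "continuous_on UNIV g2" "continuous_on UNIV h2"
    and "integrable lborel (\<lambda>x. (g1 x)\<^sup>2)" "integrable lborel (\<lambda>x. (h1 x)\<^sup>2)"
    and "integrable lborel (\<lambda>x. (g2 x)\<^sup>2)" "integrable lborel (\<lambda>x. (h2 x)\<^sup>2)"
  shows "(\<integral>\<^sup>+w. ennreal (sqrt (sqrt (line_L2sq g1 w) * sqrt (line_L2sq h1 w))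
                     * sqrt (sqrt (line_L2sq g2 w) * sqrt (line_L2sq h2 w))) \<partial>lborel)
         \<le> ennreal (L2norm3 g1 * L2norm3 h1 + L2norm3 g2 * L2norm3 h2)"
proof -
  have [measurable]: "g \<in> borel_measurable borel" if "continuous_on UNIV g" for g :: "real \<times> real \<times> real \<Rightarrow> real"
    using that by (rule borel_measurable_continuous_onI)
  define a where "a = L2norm3 g1 * L2norm3 h1"
  define b where "b = L2norm3 g2 * L2norm3 h2"
  have "0 \<le> a" "0 \<le> b"
    by (simp_all add: a_def b_def L2norm3_nonneg)
  have "(\<integral>\<^sup>+w. ennreal (sqrt (sqrt (line_L2sq g1 w) * sqrt (line_L2sq h1 w))
                     * sqrt (sqrt (line_L2sq g2 w) * sqrt (line_L2sq h2 w))) \<partial>lborel)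
        \<le> ennreal (sqrt a * sqrt b)"
    unfolding a_def b_def using assms
    by (intro nn_integral_Cauchy_Schwarz nn_integral_sqrt_line_L2sq_le) (auto simp: L2norm3_nonneg)
  also have "\<dots> \<le> ennreal (a + b)"
    using arith_geo_mean_sqrt[OF \<open>0 \<le> a\<close> \<open>0 \<le> b\<close>] \<open>0 \<le> a\<close> \<open>0 \<le> b\<close>
    by (intro ennreal_leI) (simp add: real_sqrt_mult)
  finally show ?thesis
    by (simp add: a_def b_def)
qed

section \<open>The anisotropic estimate\<close>

lemma vertical_L2_bound:
  fixes f f1 f2 f12 :: "real \<times> real \<times> real \<Rightarrow> real"
  assumes cont: "continuous_on UNIV f" "continuous_on UNIV f1" "continuous_on UNIV f2" "continuous_on UNIV f12"
    and d1: "\<And>x1 x2 x3. ((\<lambda>t. f (t, x2, x3)) has_real_derivative f1 (x1, x2, x3)) (at x1)"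
    and d2: "\<And>x1 x2 x3. ((\<lambda>t. f (x1, t, x3)) has_real_derivative f2 (x1, x2, x3)) (at x2)"
    and d12: "\<And>x1 x2 x3. ((\<lambda>t. f2 (t, x2, x3)) has_real_derivative f12 (x1, x2, x3)) (at x1)"
    and L2: "integrable lborel (\<lambda>x. (f x)\<^sup>2)" "integrable lborel (\<lambda>x. (f1 x)\<^sup>2)"
      "integrable lborel (\<lambda>x. (f2 x)\<^sup>2)" "integrable lborel (\<lambda>x. (f12 x)\<^sup>2)"
  shows "(\<integral>\<^sup>+z. ennreal ((f (x1, x2, z))\<^sup>2) \<partial>lborel)
    \<le> ennreal (L2norm3 f * L2norm3 f2 + L2norm3 f1 * L2norm3 f12)"
proof -
  note [measurable] = cont[THEN borel_measurable_continuous_onI]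
  have cont_line: "continuous_on UNIV (\<lambda>t. g (t, y, z))" "continuous_on UNIV (\<lambda>t. g (x, t, z))"
    if "continuous_on UNIV g" for g :: "real \<times> real \<times> real \<Rightarrow> real" and x y z
    by (auto intro!: continuous_on_compose2[OF that] continuous_intros)
  define good where
    "good w \<longleftrightarrow> (\<forall>k\<in>{f, f1, f2, f12}. (\<integral>\<^sup>+t. ennreal ((k (t, w))\<^sup>2) \<partial>lborel) \<noteq> \<infinity>)" for w
  define P where "P w = sqrt (line_L2sq f w) * sqrt (line_L2sq f1 w)" for w
  define \<Phi> where "\<Phi> w = sqrt (sqrt (line_L2sq f w) * sqrt (line_L2sq f2 w))
                         * sqrt (sqrt (line_L2sq f1 w) * sqrt (line_L2sq f12 w))" for w
  have AE_good: "AE z in lborel. AE y in lborel. good (y, z)"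
    using AE_line_integral_finite[OF cont(1) L2(1)] AE_line_integral_finite[OF cont(2) L2(2)]
      AE_line_integral_finite[OF cont(3) L2(3)] AE_line_integral_finite[OF cont(4) L2(4)]
    by (simp add: good_def AE_conj_iff)
  have AE_P: "AE z in lborel. (\<integral>\<^sup>+y. ennreal (P (y, z)) \<partial>lborel) \<noteq> \<infinity>"
    unfolding P_def using cont(1,2) L2(1,2) by (rule AE_nn_integral_sqrt_line_L2sq_finite)
  have "ennreal ((f (x1, x2, z))\<^sup>2) \<le> (\<integral>\<^sup>+y. ennreal (\<Phi> (y, z)) \<partial>lborel)"
    if good_z: "AE y in lborel. good (y, z)" and P_z: "(\<integral>\<^sup>+y. ennreal (P (y, z)) \<partial>lborel) \<noteq> \<infinity>" for z
  proof (rule square_le_nn_integral_majorant[where u="\<lambda>y. f (x1, y, z)" and P="\<lambda>y. P (y, z)"])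
    show "AE y in lborel. (f (x1, y, z))\<^sup>2 \<le> P (y, z)"
      using good_z by (rule eventually_mono)
        (auto simp: P_def good_def intro!: square_le_line_L2sq d1 cont_line(1)[OF cont(2)])
    show "AE y in lborel. \<bar>f (x1, y, z) * f2 (x1, y, z)\<bar> \<le> \<Phi> (y, z)"
      using good_z by (rule eventually_mono)
        (auto simp: \<Phi>_def good_def intro!: abs_mult_le_line_L2sq d1 d12 cont_line(1) cont)
  qed (use P_z d2 cont_line(2)[OF cont(3)] in auto)
  then have "(\<integral>\<^sup>+z. ennreal ((f (x1, x2, z))\<^sup>2) \<partial>lborel)
      \<le> (\<integral>\<^sup>+z. (\<integral>\<^sup>+y. ennreal (\<Phi> (y, z)) \<partial>lborel) \<partial>lborel)"
    using AE_good AE_P by (intro nn_integral_mono_AE) (auto elim: AE_mp)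
  also have "\<dots> = (\<integral>\<^sup>+w. ennreal (\<Phi> w) \<partial>lborel)"
    using lborel_pair.nn_integral_snd[of "\<lambda>w. ennreal (\<Phi> w)"] by (simp add: lborel_prod \<Phi>_def)
  also have "\<dots> \<le> ennreal (L2norm3 f * L2norm3 f2 + L2norm3 f1 * L2norm3 f12)"
    unfolding \<Phi>_def using cont L2 by (intro nn_integral_sqrt_line_L2sq_le_sum)
  finally show ?thesis .
qed

lemma borel_measurable_vertical_square:
  fixes g :: "real \<times> real \<times> real \<Rightarrow> real"
  assumes "continuous_on UNIV g"
  shows "(\<lambda>w. \<integral>\<^sup>+z. ennreal ((g (fst w, snd w, z))\<^sup>2) \<partial>lborel) \<in> borel_measurable lborel"
proof -
  have [measurable]: "g \<in> borel_measurable (lborel \<Otimes>\<^sub>M lborel \<Otimes>\<^sub>M lborel)"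
    using assms by (simp add: lborel_prod borel_measurable_continuous_onI)
  have "(\<lambda>w. \<integral>\<^sup>+z. ennreal ((g (fst w, snd w, z))\<^sup>2) \<partial>lborel) \<in> borel_measurable (lborel \<Otimes>\<^sub>M lborel)"
    by measurable
  then show ?thesis
    by (simp add: lborel_prod)
qed

lemma nn_integral_vertical_square:
  fixes g :: "real \<times> real \<times> real \<Rightarrow> real"
  assumes "continuous_on UNIV g" "integrable lborel (\<lambda>x. (g x)\<^sup>2)"
  shows "(\<integral>\<^sup>+w. (\<integral>\<^sup>+z. ennreal ((g (fst w, snd w, z))\<^sup>2) \<partial>lborel) \<partial>lborel) = ennreal ((L2norm3 g)\<^sup>2)"
  using nn_integral_lborel_vertical[of "\<lambda>x. ennreal ((g x)\<^sup>2)"] assms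
  by (simp add: lborel_prod borel_measurable_continuous_onI nn_integral_square_eq_L2norm3)

lemma epowr_le_ennreal:
  assumes "x \<le> ennreal r" "0 \<le> r" "0 < p"
  shows "epowr x p \<le> ennreal (r powr p)"
proof -
  have "x \<noteq> \<infinity>"
    using assms(1) by (auto simp: top_unique)
  then have "enn2real x \<le> r"
    using assms(1,2) by (cases x) auto
  then have "enn2real x powr p \<le> r powr p"
    using assms(3) by (intro powr_mono2) auto
  then show ?thesis
    using \<open>x \<noteq> \<infinity>\<close> by (simp add: epowr_def ennreal_leI)
qed

lemma sqrt_mult_powr_le_interpolation:
  fixes A B Q s :: real
  assumes "0 \<le> A" "A \<le> Q" "0 \<le> B" "1/2 < s" "s < 1"
  shows "(sqrt A * sqrt B) powr (1 / s)
    \<le> Q powr ((1 - s) / s) * (A powr ((2 * s - 1) / (2 * s)) * B powr (1 - (2 * s - 1) / (2 * s)))"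
proof -
  have "(sqrt A * sqrt B) powr (1 / s) = A powr (1 / (2 * s)) * B powr (1 / (2 * s))"
    using assms by (simp add: sqrt_def[symmetric] powr_half_sqrt[symmetric] powr_mult powr_powr)
  also have "A powr (1 / (2 * s)) = A powr ((1 - s) / s) * A powr ((2 * s - 1) / (2 * s))"
    using assms(4) by (simp add: powr_add[symmetric] field_simps)
  also have "\<dots> \<le> Q powr ((1 - s) / s) * A powr ((2 * s - 1) / (2 * s))"
    using assms by (intro mult_right_mono powr_mono2) auto
  also have "1 / (2 * s) = 1 - (2 * s - 1) / (2 * s)"
    using assms(4) by (simp add: field_simps)
  finally show ?thesis
    by (simp add: mult.assoc mult_right_mono)
qed

lemma epowr_SUP_vertical_le:
  fixes f f3 :: "real \<times> real \<times> real \<Rightarrow> real"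
  assumes "\<And>z. ((\<lambda>t. f (x1, x2, t)) has_real_derivative f3 (x1, x2, z)) (at z)" "continuous_on UNIV f3"
    and "(\<integral>\<^sup>+z. ennreal ((f (x1, x2, z))\<^sup>2) \<partial>lborel) \<le> ennreal A"
    and "(\<integral>\<^sup>+z. ennreal ((f3 (x1, x2, z))\<^sup>2) \<partial>lborel) \<le> ennreal B"
    and "0 \<le> A" "A \<le> Q" "0 \<le> B" "1/2 < s" "s < 1"
  shows "epowr (SUP z. ennreal \<bar>f (x1, x2, z)\<bar>) (2 / s)
    \<le> ennreal (Q powr ((1 - s) / s) * (A powr ((2 * s - 1) / (2 * s)) * B powr (1 - (2 * s - 1) / (2 * s))))"
proof -
  have "continuous_on UNIV (\<lambda>z. f3 (x1, x2, z))"
    by (auto intro!: continuous_on_compose2[OF assms(2)] continuous_intros)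
  then have "(f (x1, x2, z))\<^sup>2 \<le> sqrt A * sqrt B" for z
    using assms by (intro Agmon_inequality[where u="\<lambda>z. f (x1, x2, z)"])
  then have "\<bar>f (x1, x2, z)\<bar> \<le> sqrt (sqrt A * sqrt B)" for z
    by (simp add: real_le_rsqrt)
  then have "(SUP z. ennreal \<bar>f (x1, x2, z)\<bar>) \<le> ennreal (sqrt (sqrt A * sqrt B))"
    by (intro SUP_least ennreal_leI)
  then have "epowr (SUP z. ennreal \<bar>f (x1, x2, z)\<bar>) (2 / s) \<le> ennreal (sqrt (sqrt A * sqrt B) powr (2 / s))"
    using assms by (intro epowr_le_ennreal) auto
  also have "sqrt (sqrt A * sqrt B) powr (2 / s) = (sqrt A * sqrt B) powr (1 / s)"
    using assms by (simp add: powr_half_sqrt[symmetric] powr_powr)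
  also have "\<dots> \<le> Q powr ((1 - s) / s) * (A powr ((2 * s - 1) / (2 * s)) * B powr (1 - (2 * s - 1) / (2 * s)))"
    using assms by (intro sqrt_mult_powr_le_interpolation)
  finally show ?thesis
    by (simp add: ennreal_leI)
qed

lemma nn_integral_epowr_SUP_vertical_le:
  fixes f f3 :: "real \<times> real \<times> real \<Rightarrow> real"
  assumes s: "1/2 < s" "s < 1"
    and cont: "continuous_on UNIV f" "continuous_on UNIV f3"
    and d3: "\<And>x1 x2 x3. ((\<lambda>t. f (x1, x2, t)) has_real_derivative f3 (x1, x2, x3)) (at x3)"
    and L2: "integrable lborel (\<lambda>x. (f x)\<^sup>2)" "integrable lborel (\<lambda>x. (f3 x)\<^sup>2)"
    and vertical: "\<And>x1 x2. (\<integral>\<^sup>+z. ennreal ((f (x1, x2, z))\<^sup>2) \<partial>lborel) \<le> ennreal Q" and "0 \<le> Q"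
  shows "(\<integral>\<^sup>+w. epowr (SUP z. ennreal \<bar>f (fst w, snd w, z)\<bar>) (2 / s) \<partial>lborel)
    \<le> ennreal (Q powr ((1 - s) / s)
               * (((L2norm3 f)\<^sup>2) powr ((2 * s - 1) / (2 * s)) * ((L2norm3 f3)\<^sup>2) powr (1 - (2 * s - 1) / (2 * s))))"
proof -
  define \<theta> where "\<theta> = (2 * s - 1) / (2 * s)"
  define Z where "Z g w = (\<integral>\<^sup>+z. ennreal ((g (fst w, snd w, z))\<^sup>2) \<partial>lborel)"
    for g :: "real \<times> real \<times> real \<Rightarrow> real" and w :: "real \<times> real"
  note [measurable] = cont[THEN borel_measurable_vertical_square, folded Z_def]
  define A where "A w = enn2real (Z f w)" for w
  define B where "B w = enn2real (Z f3 w)" for w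
  have "Z f w \<noteq> \<infinity>" "A w \<le> Q" for w
    using vertical[of "fst w" "snd w"] \<open>0 \<le> Q\<close> by (auto simp: Z_def A_def top_unique enn2real_leI)
  have pointwise: "epowr (SUP z. ennreal \<bar>f (fst w, snd w, z)\<bar>) (2 / s)
      \<le> ennreal (Q powr ((1 - s) / s)) * ennreal (A w powr \<theta> * B w powr (1 - \<theta>))" if "Z f3 w \<noteq> \<infinity>" for w
  proof -
    have "epowr (SUP z. ennreal \<bar>f (fst w, snd w, z)\<bar>) (2 / s)
        \<le> ennreal (Q powr ((1 - s) / s) * (A w powr \<theta> * B w powr (1 - \<theta>)))"
      using that \<open>Z f w \<noteq> \<infinity>\<close> \<open>A w \<le> Q\<close> s cont(2) d3 unfolding \<theta>_def
      by (intro epowr_SUP_vertical_le) (auto simp: A_def B_def Z_def ennreal_enn2real_if)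
    then show ?thesis
      by (simp add: ennreal_mult')
  qed
  have "AE w in lborel. Z f3 w \<noteq> \<infinity>"
    using borel_measurable_vertical_square[OF cont(2)] nn_integral_vertical_square[OF cont(2) L2(2)]
    unfolding Z_def by (intro nn_integral_PInf_AE) auto
  then have "(\<integral>\<^sup>+w. epowr (SUP z. ennreal \<bar>f (fst w, snd w, z)\<bar>) (2 / s) \<partial>lborel)
      \<le> (\<integral>\<^sup>+w. ennreal (Q powr ((1 - s) / s)) * ennreal (A w powr \<theta> * B w powr (1 - \<theta>)) \<partial>lborel)"
    by (intro nn_integral_mono_AE) (auto elim!: eventually_mono intro: pointwise)
  also have "\<dots> = ennreal (Q powr ((1 - s) / s)) * (\<integral>\<^sup>+w. ennreal (A w powr \<theta> * B w powr (1 - \<theta>)) \<partial>lborel)"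
    unfolding A_def B_def by (intro nn_integral_cmult) measurable
  also have "\<dots> \<le> ennreal (Q powr ((1 - s) / s)) * ennreal (((L2norm3 f)\<^sup>2) powr \<theta> * ((L2norm3 f3)\<^sup>2) powr (1 - \<theta>))"
  proof (intro mult_left_mono nn_integral_Holder)
    show "(\<integral>\<^sup>+w. ennreal (A w) \<partial>lborel) \<le> ennreal ((L2norm3 f)\<^sup>2)"
      unfolding A_def Z_def nn_integral_vertical_square[OF cont(1) L2(1), symmetric]
      by (intro nn_integral_mono) (simp add: ennreal_enn2real_if)
    show "(\<integral>\<^sup>+w. ennreal (B w) \<partial>lborel) \<le> ennreal ((L2norm3 f3)\<^sup>2)"
      unfolding B_def Z_def nn_integral_vertical_square[OF cont(2) L2(2), symmetric]
      by (intro nn_integral_mono) (simp add: ennreal_enn2real_if)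
  qed (use s in \<open>auto simp: \<theta>_def A_def B_def\<close>)
  finally show ?thesis
    by (simp add: \<theta>_def ennreal_mult')
qed

lemma interpolation_bound_powr_eq:
  fixes Q a b s :: real
  assumes "0 \<le> Q" "0 \<le> a" "0 \<le> b" "0 < s"
  shows "(Q powr ((1 - s) / s) * ((a\<^sup>2) powr ((2 * s - 1) / (2 * s)) * (b\<^sup>2) powr (1 - (2 * s - 1) / (2 * s))))
           powr (1 / (2 / s))
         = Q powr ((1 - s) / 2) * a powr ((2 * s - 1) / 2) * b powr (1 / 2)"
proof -
  have split: "(Q powr e * ((a\<^sup>2) powr \<theta> * (b\<^sup>2) powr (1 - \<theta>))) powr p
      = Q powr (e * p) * a powr (2 * \<theta> * p) * b powr (2 * (1 - \<theta>) * p)" for e \<theta> p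
    using assms by (simp add: powr_mult powr_powr flip: powr_numeral)
  have exponents: "(1 - s) / s * (1 / (2 / s)) = (1 - s) / 2"
    "2 * ((2 * s - 1) / (2 * s)) * (1 / (2 / s)) = (2 * s - 1) / 2"
    "2 * (1 - (2 * s - 1) / (2 * s)) * (1 / (2 / s)) = 1 / 2"
    using assms(4) by (simp_all add: field_simps)
  show ?thesis
    unfolding split exponents ..
qed

lemma mixed_norm_le:
  fixes f f1 f2 f3 f12 :: "real \<times> real \<times> real \<Rightarrow> real"
  assumes s: "1/2 < s" "s < 1"
    and cont: "continuous_on UNIV f" "continuous_on UNIV f1" "continuous_on UNIV f2"
      "continuous_on UNIV f3" "continuous_on UNIV f12"
    and d1: "\<And>x1 x2 x3. ((\<lambda>t. f (t, x2, x3)) has_real_derivative f1 (x1, x2, x3)) (at x1)"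
    and d2: "\<And>x1 x2 x3. ((\<lambda>t. f (x1, t, x3)) has_real_derivative f2 (x1, x2, x3)) (at x2)"
    and d3: "\<And>x1 x2 x3. ((\<lambda>t. f (x1, x2, t)) has_real_derivative f3 (x1, x2, x3)) (at x3)"
    and d12: "\<And>x1 x2 x3. ((\<lambda>t. f2 (t, x2, x3)) has_real_derivative f12 (x1, x2, x3)) (at x1)"
    and L2: "integrable lborel (\<lambda>x. (f x)\<^sup>2)" "integrable lborel (\<lambda>x. (f1 x)\<^sup>2)"
      "integrable lborel (\<lambda>x. (f2 x)\<^sup>2)" "integrable lborel (\<lambda>x. (f3 x)\<^sup>2)"
      "integrable lborel (\<lambda>x. (f12 x)\<^sup>2)"
  shows "mixed_norm (2 / s) f \<le>
    ennreal ((L2norm3 f * L2norm3 f2 + L2norm3 f1 * L2norm3 f12) powr ((1 - s) / 2)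
             * L2norm3 f powr ((2 * s - 1) / 2) * L2norm3 f3 powr (1 / 2))"
proof -
  define Q where "Q = L2norm3 f * L2norm3 f2 + L2norm3 f1 * L2norm3 f12"
  have "0 \<le> Q"
    by (simp add: Q_def L2norm3_nonneg)
  have "(\<integral>\<^sup>+w. epowr (SUP z. ennreal \<bar>f (fst w, snd w, z)\<bar>) (2 / s) \<partial>lborel)
      \<le> ennreal (Q powr ((1 - s) / s)
                 * (((L2norm3 f)\<^sup>2) powr ((2 * s - 1) / (2 * s)) * ((L2norm3 f3)\<^sup>2) powr (1 - (2 * s - 1) / (2 * s))))"
    using s cont(1,4) d3 L2(1,4) \<open>0 \<le> Q\<close> unfolding Q_def
    by (intro nn_integral_epowr_SUP_vertical_le vertical_L2_bound cont d1 d2 d12 L2)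
  then have "mixed_norm (2 / s) f
      \<le> ennreal ((Q powr ((1 - s) / s) * (((L2norm3 f)\<^sup>2) powr ((2 * s - 1) / (2 * s))
                  * ((L2norm3 f3)\<^sup>2) powr (1 - (2 * s - 1) / (2 * s)))) powr (1 / (2 / s)))"
    unfolding mixed_norm_def using s by (intro epowr_le_ennreal) auto
  also have "\<dots> = ennreal (Q powr ((1 - s) / 2) * L2norm3 f powr ((2 * s - 1) / 2) * L2norm3 f3 powr (1 / 2))"
    using s \<open>0 \<le> Q\<close> by (subst interpolation_bound_powr_eq) (auto simp: L2norm3_nonneg)
  finally show ?thesis
    by (simp add: Q_def)
qed

theorem lemmaA1:
  fixes s :: real
  assumes "1/2 < s" and "s < 1"
  shows "\<exists>C>0. \<forall>(f :: real \<times> real \<times> real \<Rightarrow> real) f1 f2 f3 f12.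
    continuous_on UNIV f \<and> continuous_on UNIV f1 \<and> continuous_on UNIV f2 \<and>
    continuous_on UNIV f3 \<and> continuous_on UNIV f12 \<and>
    (\<forall>x1 x2 x3. ((\<lambda>t. f (t, x2, x3)) has_real_derivative f1 (x1, x2, x3)) (at x1)) \<and>
    (\<forall>x1 x2 x3. ((\<lambda>t. f (x1, t, x3)) has_real_derivative f2 (x1, x2, x3)) (at x2)) \<and>
    (\<forall>x1 x2 x3. ((\<lambda>t. f (x1, x2, t)) has_real_derivative f3 (x1, x2, x3)) (at x3)) \<and>
    (\<forall>x1 x2 x3. ((\<lambda>t. f2 (t, x2, x3)) has_real_derivative f12 (x1, x2, x3)) (at x1)) \<and>
    integrable lborel (\<lambda>x. (f x)\<^sup>2) \<and> integrable lborel (\<lambda>x. (f1 x)\<^sup>2) \<and>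
    integrable lborel (\<lambda>x. (f2 x)\<^sup>2) \<and> integrable lborel (\<lambda>x. (f3 x)\<^sup>2) \<and>
    integrable lborel (\<lambda>x. (f12 x)\<^sup>2)
    \<longrightarrow> mixed_norm (2 / s) f \<le>
        ennreal (C * (L2norm3 f * L2norm3 f2 + L2norm3 f1 * L2norm3 f12) powr ((1 - s) / 2)
                   * L2norm3 f powr ((2 * s - 1) / 2) * L2norm3 f3 powr (1 / 2))"
  by (intro exI[of _ 1] conjI allI impI) (auto intro!: mixed_norm_le[OF assms])

end
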